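(* Let $k$ and $n$ be positive integers with $n\geq 4^k$. Let $H_{k,n}$ be the $n$-vertex graph consisting of a clique $K_k$ together with $n-k$ isolated vertices, and let $G_{k,n}$ be the $(n+1)$-vertex graph obtained from $H_{k,n}$ by adding a new vertex adjacent to all $n$ vertices of $H_{k,n}$. Then $r(G_{k,n}) > nk$.
   Context: For a graph $F$, the Ramsey number $r(F)$ is the minimum $N$ such that every two-coloring of the edges of $K_N$ contains a monochromatic copy of $F$. *)

theory Defs
  imports Main
begin

(* A finite simple graph F is given by a vertex set V and an edge set E,
   each edge being a 2-element subset of V. *)

(* A red/blue two-colouring of the edges of K_N (vertex set {0..<N}) is a
   function col :: nat set => bool; only its values on 2-subsets of {..<N}
   matter. *)
definition mono_copy :: "'a set \<Rightarrow> 'a set set \<Rightarrow> nat \<Rightarrow> (nat set \<Rightarrow> bool) \<Rightarrow> bool" where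
  "mono_copy V E N col \<longleftrightarrow>
     (\<exists>(f::'a \<Rightarrow> nat) (b::bool). inj_on f V \<and> f ` V \<subseteq> {..<N} \<and> (\<forall>e\<in>E. col (f ` e) = b))"

definition ramsey_number :: "'a set \<Rightarrow> 'a set set \<Rightarrow> nat" where
  "ramsey_number V E = (LEAST N. \<forall>col. mono_copy V E N col)"

(* G_{k,n}: vertices 0..n; clique on {0..<k}; vertices k..n-1 isolated in H_{k,n};
   vertex n is the apex adjacent to all of 0..n-1. *)
definition G_verts :: "nat \<Rightarrow> nat set" where
  "G_verts n = {..n}"

definition G_edges :: "nat \<Rightarrow> nat \<Rightarrow> nat set set" where
  "G_edges k n = {{i, j} | i j. i < k \<and> j < k \<and> i \<noteq> j} \<union> {{i, n} | i. i < n}"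

end

theory Submission
  imports Defs "HOL-Library.Ramsey"
begin

(* Split the vertices of K_{nk} into k consecutive blocks of size n; colour an edge red if
   it lies inside a block and blue otherwise. A red copy of G_{k,n} would place the apex and
   its n neighbours, n + 1 vertices in all, into a single block. A blue copy would place the
   apex and the k-clique, which together form a K_{k+1}, into k + 1 different blocks.
   The hypothesis n >= 4^k only serves to guarantee k < n, so that the apex is not in the clique. Ramsey's theorem is used only to know that r(G_{k,n})
   exists, so that the LEAST in its definition is not a junk value. *)

lemma mono_copy_mono: "mono_copy V E N col \<Longrightarrow> N \<le> M \<Longrightarrow> mono_copy V E M col"
  unfolding mono_copy_def by (meson lessThan_subset_iff order_trans)

lemma ex_mono_copy_all_colourings:
  fixes V :: "'a set"
  assumes "finite V" and edges: "\<And>e. e \<in> E \<Longrightarrow> e \<subseteq> V \<and> card e = 2"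
  shows "\<exists>N. \<forall>col. mono_copy V E N col"
proof -
  obtain r where r: "\<forall>(W::nat set) F. finite W \<and> card W \<ge> r \<longrightarrow>
      (\<exists>R\<subseteq>W. card R = card V \<and> clique R F \<or> card R = card V \<and> indep R F)"
    using ramsey2 by blast
  have "mono_copy V E r col" for col
  proof -
    obtain R where R: "R \<subseteq> {..<r}" "card R = card V"
      and hom: "clique R {S. col S} \<or> indep R {S. col S}"
      using r[rule_format, of "{..<r}" "{S. col S}"] by auto
    obtain h where h: "bij_betw h V R"
      using finite_same_card_bij[OF \<open>finite V\<close> finite_subset[OF R(1)]] R(2) by auto
    have edge_image: "\<exists>v\<in>R. \<exists>w\<in>R. v \<noteq> w \<and> h ` e = {v, w}" if e: "e \<in> E" for e
    proof -
      obtain x y where "e = {x, y}" "x \<noteq> y"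
        using edges[OF e] card_2_iff by metis
      moreover have "x \<in> V" "y \<in> V"
        using edges[OF e] \<open>e = {x, y}\<close> by auto
      moreover have "h x \<noteq> h y"
        using \<open>x \<in> V\<close> \<open>y \<in> V\<close> \<open>x \<noteq> y\<close> bij_betw_imp_inj_on[OF h] inj_on_contraD by metis
      ultimately show ?thesis
        using bij_betw_apply[OF h] by auto
    qed
    from hom have "\<exists>b. \<forall>e\<in>E. col (h ` e) = b"
    proof
      assume "clique R {S. col S}"
      then have "col (h ` e)" if "e \<in> E" for e
        using edge_image[OF that] unfolding clique_def by auto
      then show ?thesis by blast
    next
      assume "indep R {S. col S}"
      then have "\<not> col (h ` e)" if "e \<in> E" for e
        using edge_image[OF that] unfolding indep_def by auto
      then show ?thesis by blast
    qed
    then show ?thesis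
      using h R(1) unfolding mono_copy_def bij_betw_def by blast
  qed
  then show ?thesis by blast
qed

lemma ramsey_number_gt:
  assumes "\<exists>N. \<forall>col. mono_copy V E N col" and "\<not> mono_copy V E m col"
  shows "m < ramsey_number V E"
proof -
  have "\<forall>col. mono_copy V E (ramsey_number V E) col"
    unfolding ramsey_number_def using assms(1) by (rule LeastI_ex)
  then show ?thesis
    using assms(2) mono_copy_mono by (meson not_less)
qed

definition block_colouring :: "nat \<Rightarrow> nat set \<Rightarrow> bool" where
  "block_colouring n S \<longleftrightarrow> (\<forall>a\<in>S. \<forall>b\<in>S. a div n = b div n)"

lemma block_colouring_pair [simp]: "block_colouring n {a, b} \<longleftrightarrow> a div n = b div n"
  unfolding block_colouring_def by auto

lemma card_le_if_inj_same_div: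
  fixes f :: "'a \<Rightarrow> nat"
  assumes "inj_on f A" and "n > 0" and same: "\<And>x. x \<in> A \<Longrightarrow> f x div n = q"
  shows "card A \<le> n"
proof -
  have "f ` A \<subseteq> {q * n..<q * n + n}"
  proof
    fix y assume "y \<in> f ` A"
    then have "y div n = q" using same by blast
    moreover have "y = y div n * n + y mod n" and "y mod n < n"
      using \<open>n > 0\<close> by simp_all
    ultimately show "y \<in> {q * n..<q * n + n}" by simp
  qed
  then have "card (f ` A) \<le> card {q * n..<q * n + n}"
    by (rule card_mono[OF finite_atLeastLessThan])
  then show ?thesis
    using \<open>inj_on f A\<close> by (simp add: card_image)
qed

lemma card_le_if_inj_div_bounded:
  fixes f :: "'a \<Rightarrow> nat"
  assumes "inj_on (\<lambda>x. f x div n) A" and "f ` A \<subseteq> {..<n * k}"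
  shows "card A \<le> k"
proof -
  have "f x div n < k" if "x \<in> A" for x
  proof -
    have "f x < k * n" using assms(2) that by (auto simp: mult.commute[of n k])
    then show ?thesis by (rule less_mult_imp_div_less)
  qed
  then have "(\<lambda>x. f x div n) ` A \<subseteq> {..<k}" by blast
  then have "card A \<le> card {..<k}"
    by (rule card_inj_on_le[OF assms(1)]) simp
  then show ?thesis by simp
qed

lemma mem_G_edges:
  "e \<in> G_edges k n \<longleftrightarrow> (\<exists>i j. e = {i, j} \<and> i < k \<and> j < k \<and> i \<noteq> j) \<or> (\<exists>i. e = {i, n} \<and> i < n)"
  by (simp only: G_edges_def Un_iff mem_Collect_eq)

lemma G_edges_are_2_subsets:
  assumes "k \<le> n" and "e \<in> G_edges k n"
  shows "e \<subseteq> G_verts n \<and> card e = 2"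
proof -
  from assms(2) consider i j where "e = {i, j}" "i < k" "j < k" "i \<noteq> j" | i where "e = {i, n}" "i < n"
    unfolding mem_G_edges by blast
  then show ?thesis
  proof cases
    case 1
    then show ?thesis using assms(1) by (simp add: G_verts_def)
  next
    case 2
    then show ?thesis by (simp add: G_verts_def)
  qed
qed

lemma apex_edge: "i < n \<Longrightarrow> {i, n} \<in> G_edges k n"
  unfolding mem_G_edges by blast

lemma clique_apex_edge:
  assumes "k \<le> n" "i \<in> insert n {..<k}" "j \<in> insert n {..<k}" "i \<noteq> j"
  shows "{i, j} \<in> G_edges k n"
proof -
  consider "i = n" "j < k" | "j = n" "i < k" | "i < k" "j < k"
    using assms(2-4) by auto
  then show ?thesis
  proof cases
    case 1
    then show ?thesis using apex_edge[of j n k] assms(1) by (simp add: insert_commute)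
  next
    case 2
    then show ?thesis using apex_edge[of i n k] assms(1) by simp
  next
    case 3
    then show ?thesis using assms(4) unfolding mem_G_edges by blast
  qed
qed

lemma no_mono_copy_block_colouring:
  assumes "k < n"
  shows "\<not> mono_copy (G_verts n) (G_edges k n) (n * k) (block_colouring n)"
proof
  assume "mono_copy (G_verts n) (G_edges k n) (n * k) (block_colouring n)"
  then obtain f b where inj: "inj_on f {..n}" and range: "f ` {..n} \<subseteq> {..<n * k}"
    and mono: "\<forall>e\<in>G_edges k n. block_colouring n (f ` e) = b"
    unfolding mono_copy_def G_verts_def by blast
  have colour: "(f i div n = f j div n) = b" if "{i, j} \<in> G_edges k n" for i j
    using mono[rule_format, OF that] by simp
  show False
  proof (cases b)
    case True
    have same_block: "f i div n = f n div n" if "i \<in> {..n}" for i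
    proof (cases "i = n")
      case False
      with that have "i < n" by simp
      from colour[OF apex_edge[OF this]] \<open>b\<close> show ?thesis by simp
    qed simp
    have "card {..n} \<le> n"
      using card_le_if_inj_same_div[OF inj _ same_block] assms by simp
    then show False by simp
  next
    case False
    have "f i div n \<noteq> f j div n"
      if "i \<in> insert n {..<k}" "j \<in> insert n {..<k}" "i \<noteq> j" for i j
      using colour[OF clique_apex_edge[OF _ that]] \<open>\<not> b\<close> assms by simp
    then have inj_div: "inj_on (\<lambda>i. f i div n) (insert n {..<k})"
      unfolding inj_on_def by blast
    have "insert n {..<k} \<subseteq> {..n}"
      using assms by auto
    with range have "f ` insert n {..<k} \<subseteq> {..<n * k}"
      by blast
    with inj_div have "card (insert n {..<k}) \<le> k"
      by (rule card_le_if_inj_div_bounded)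
    then show False using assms by simp
  qed
qed

theorem lemma2p2:
  fixes k n :: nat
  assumes "k \<ge> 1" and "n \<ge> 1" and "n \<ge> 4 ^ k"
  shows "ramsey_number (G_verts n) (G_edges k n) > n * k"
proof -
  have "k < n"
  proof -
    have "k < 2 ^ k" by (rule less_exp)
    also have "\<dots> \<le> 4 ^ k" by (simp add: power_mono)
    finally show ?thesis using assms(3) by simp
  qed
  then have "\<exists>N. \<forall>col. mono_copy (G_verts n) (G_edges k n) N col"
    by (intro ex_mono_copy_all_colourings G_edges_are_2_subsets) (auto simp: G_verts_def)
  then show ?thesis
    using ramsey_number_gt no_mono_copy_block_colouring[OF \<open>k < n\<close>] by blast
qed

end
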